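(* Let $G=(V,E)$ be a finite simple undirected graph, $\Gamma$ a subgroup of $\mathrm{Aut}(G)$, and $(G,\mathcal{C})$ the colored graph whose coloring is given by the $\Gamma$-orbits. Fix any ordering $(V_{\eta_1},\dots,V_{\eta_r})$ of the vertex color classes and let $m$ be the $2$-path function with respect to this ordering. (i) For every $\{v,w\}\in\tilde E$ and $\sigma\in\Gamma$, $m_{v\to w}=m_{\sigma(v)\to\sigma(w)}$. (ii) If $\Gamma$ is generously transitive or cyclic, then for all $v,w\in V$ with $c(v)=c(w)$ one has $m_{v\to w}(k,h)=m_{w\to v}(k,h)$ for all $k,h\in F$.
   Context: $\mathrm{Aut}(G)$ is the group of permutations $\sigma$ of $V$ with $\sigma(v)\sim\sigma(w)\iff v\sim w$. The extended edge set is $\tilde E=E\cup\{\{v\}:v\in V\}$, on which $\Gamma$ acts by $\sigma\cdot\{v,w\}=\{\sigma(v),\sigma(w)\}$. The orbit coloring: the vertex color classes $V_1,\dots,V_r$ are the $\Gamma$-orbits on $V$ (equivalently, loop orbits), and the edge color classes are the $\Gamma$-orbits on $E$; $c(v,w)$ denotes the color (orbit label) of $\{v,w\}\in\tilde E$, with loop $\{v\}$ colored by the index $i$ of the orbit $V_i\ni v$, and $c(v)=c(v,v)$. For the ordering, $\pi(v)=i$ iff $v\in V_{\eta_i}$ and $V_{\le i}=V_{\eta_1}\cup\dots\cup V_{\eta_i}$; $m_{v\to w}(k,h)=|\{u\in V_{\le\min(\pi(v),\pi(w))}: c(v,u)=k,\ c(u,w)=h\}|$ for $\{v,w\}\in\tilde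 E$. $F_i=\{c(v,w):\{v,w\}\in\tilde E,\ c(v)=c(w)=i\}$ and $F=\bigcup_iF_i$. $\Gamma$ is generously transitive if for every orbit $V_i$ and distinct $a,b\in V_i$ there is $\sigma\in\Gamma$ with $\sigma(a)=b$ and $\sigma(b)=a$. *)

theory Defs
  imports Main
begin

definition simple_graph :: "'a set \<Rightarrow> ('a \<Rightarrow> 'a \<Rightarrow> bool) \<Rightarrow> bool" where
  "simple_graph V E \<longleftrightarrow> finite V \<and> (\<forall>v w. E v w \<longrightarrow> v \<in> V \<and> w \<in> V)
     \<and> (\<forall>v w. E v w \<longrightarrow> E w v) \<and> (\<forall>v. \<not> E v v)"

definition perm_of :: "'a set \<Rightarrow> ('a \<Rightarrow> 'a) \<Rightarrow> bool" where
  "perm_of V \<sigma> \<longleftrightarrow> bij_betw \<sigma> V V \<and> (\<forall>x. x \<notin> V \<longrightarrow> \<sigma> x = x)"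

definition graph_aut :: "'a set \<Rightarrow> ('a \<Rightarrow> 'a \<Rightarrow> bool) \<Rightarrow> ('a \<Rightarrow> 'a) set" where
  "graph_aut V E = {\<sigma>. perm_of V \<sigma> \<and> (\<forall>v\<in>V. \<forall>w\<in>V. E (\<sigma> v) (\<sigma> w) \<longleftrightarrow> E v w)}"

definition aut_subgroup :: "'a set \<Rightarrow> ('a \<Rightarrow> 'a \<Rightarrow> bool) \<Rightarrow> ('a \<Rightarrow> 'a) set \<Rightarrow> bool" where
  "aut_subgroup V E \<Gamma> \<longleftrightarrow> \<Gamma> \<subseteq> graph_aut V E \<and> id \<in> \<Gamma>
     \<and> (\<forall>\<sigma>\<in>\<Gamma>. \<forall>\<tau>\<in>\<Gamma>. \<sigma> \<circ> \<tau> \<in> \<Gamma>) \<and> (\<forall>\<sigma>\<in>\<Gamma>. inv \<sigma> \<in> \<Gamma>)"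

definition generously_transitive :: "'a set \<Rightarrow> ('a \<Rightarrow> 'a) set \<Rightarrow> bool" where
  "generously_transitive V \<Gamma> \<longleftrightarrow>
     (\<forall>a\<in>V. \<forall>b\<in>V. a \<noteq> b \<longrightarrow> (\<exists>\<tau>\<in>\<Gamma>. \<tau> a = b) \<longrightarrow> (\<exists>\<sigma>\<in>\<Gamma>. \<sigma> a = b \<and> \<sigma> b = a))"

definition cyclic_group :: "('a \<Rightarrow> 'a) set \<Rightarrow> bool" where
  "cyclic_group \<Gamma> \<longleftrightarrow> (\<exists>g\<in>\<Gamma>. \<Gamma> = {g ^^ n | n. True})"

definition vorbit :: "('a \<Rightarrow> 'a) set \<Rightarrow> 'a \<Rightarrow> 'a set" where
  "vorbit \<Gamma> v = {\<sigma> v | \<sigma>. \<sigma> \<in> \<Gamma>}"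

definition vertex_classes :: "'a set \<Rightarrow> ('a \<Rightarrow> 'a) set \<Rightarrow> 'a set set" where
  "vertex_classes V \<Gamma> = vorbit \<Gamma> ` V"

definition ext_edge :: "'a set \<Rightarrow> ('a \<Rightarrow> 'a \<Rightarrow> bool) \<Rightarrow> 'a \<Rightarrow> 'a \<Rightarrow> bool" where
  "ext_edge V E v w \<longleftrightarrow> v \<in> V \<and> w \<in> V \<and> (v = w \<or> E v w)"

text \<open>Orbit coloring: the color of {v,w} in the extended edge set is its \<Gamma>-orbit
(a label; loops {v} are labelled by the orbit of {v}, in bijection with the vertex
orbit of v).\<close>
definition color :: "'a set \<Rightarrow> ('a \<Rightarrow> 'a \<Rightarrow> bool) \<Rightarrow> ('a \<Rightarrow> 'a) set \<Rightarrow> 'a \<Rightarrow> 'a \<Rightarrow> 'a set set option" where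
  "color V E \<Gamma> v w = (if ext_edge V E v w then Some {\<sigma> ` {v, w} | \<sigma>. \<sigma> \<in> \<Gamma>} else None)"

text \<open>Ordering of the vertex classes as a list ord (0-based): pi v = i iff v in ord!i.\<close>
definition ord_pos :: "'a set list \<Rightarrow> 'a \<Rightarrow> nat" where
  "ord_pos ord v = (THE i. i < length ord \<and> v \<in> ord ! i)"

definition ord_le :: "'a set list \<Rightarrow> nat \<Rightarrow> 'a set" where
  "ord_le ord i = (\<Union>j\<in>{j. j \<le> i \<and> j < length ord}. ord ! j)"

definition two_path :: "'a set \<Rightarrow> ('a \<Rightarrow> 'a \<Rightarrow> bool) \<Rightarrow> ('a \<Rightarrow> 'a) set \<Rightarrow> 'a set list
    \<Rightarrow> 'a \<Rightarrow> 'a \<Rightarrow> 'a set set \<Rightarrow> 'a set set \<Rightarrow> nat" where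
  "two_path V E \<Gamma> ord v w k h =
     card {u \<in> ord_le ord (min (ord_pos ord v) (ord_pos ord w)).
            color V E \<Gamma> v u = Some k \<and> color V E \<Gamma> u w = Some h}"

text \<open>F: colors of extended edges whose endpoints lie in the same vertex class.\<close>
definition same_class_colors :: "'a set \<Rightarrow> ('a \<Rightarrow> 'a \<Rightarrow> bool) \<Rightarrow> ('a \<Rightarrow> 'a) set \<Rightarrow> 'a set set set" where
  "same_class_colors V E \<Gamma> = {k. \<exists>v w. ext_edge V E v w
       \<and> color V E \<Gamma> v v = color V E \<Gamma> w w \<and> color V E \<Gamma> v w = Some k}"

end

theory Submission
  imports Defs "HOL-Combinatorics.Permutations"
begin

text \<open>Every \<sigma> \<in> \<Gamma> preserves adjacency, hence colours, vertex classes and the ordering data,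
so it maps the vertices counted by \<open>m\<^sub>v\<^sub>\<rightarrow>\<^sub>w(k,h)\<close> bijectively onto those counted by
\<open>m\<^sub>\<sigma>\<^sub>v\<^sub>\<rightarrow>\<^sub>\<sigma>\<^sub>w(k,h)\<close>; this is (i). For (ii), \<open>w = \<tau> v\<close> for some \<tau> \<in> \<Gamma>. A generously
transitive \<Gamma> contains an element swapping \<open>v\<close> and \<open>w\<close>, and (i) applies. If \<Gamma> is abelian,
every vertex counted by \<open>m\<^sub>v\<^sub>\<rightarrow>\<^sub>w(k,h)\<close> lies in the orbit of \<open>v\<close> because \<open>k \<in> F\<close>; writing it as
\<open>\<rho> v\<close>, the assignment \<open>\<rho> v \<mapsto> \<tau> (\<rho>\<inverse> v)\<close> is well defined and injective by commutativity
and lands among the vertices counted by \<open>m\<^sub>w\<^sub>\<rightarrow>\<^sub>v(k,h)\<close>. The reverse inequality follows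
by exchanging the roles of \<open>v\<close> and \<open>w\<close>.\<close>

definition abelian :: "('a \<Rightarrow> 'a) set \<Rightarrow> bool" where
  "abelian \<Gamma> \<longleftrightarrow> (\<forall>\<rho>\<in>\<Gamma>. \<forall>\<tau>\<in>\<Gamma>. \<rho> \<circ> \<tau> = \<tau> \<circ> \<rho>)"

lemma cyclic_group_imp_abelian: "cyclic_group \<Gamma> \<Longrightarrow> abelian \<Gamma>"
  unfolding cyclic_group_def abelian_def by (auto simp: funpow_add[symmetric] add.commute)

lemma abelian_inv_apply_eqD:
  assumes "abelian \<Gamma>" "\<rho> \<in> \<Gamma>" "\<rho>' \<in> \<Gamma>" "bij \<rho>" "bij \<rho>'" "inv \<rho> x = inv \<rho>' x"
  shows "\<rho> x = \<rho>' x"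
proof -
  have "\<rho> x = \<rho> (\<rho>' (inv \<rho>' x))"
    using assms(5) by (simp add: bij_is_surj surj_f_inv_f)
  also have "\<dots> = \<rho> (\<rho>' (inv \<rho> x))"
    using assms(6) by simp
  also have "\<dots> = \<rho>' (\<rho> (inv \<rho> x))"
    using assms(1-3) unfolding abelian_def by (metis comp_apply)
  also have "\<dots> = \<rho>' x"
    using assms(4) by (simp add: bij_is_surj surj_f_inv_f)
  finally show ?thesis .
qed

lemma perm_of_iff_permutes: "perm_of V \<sigma> \<longleftrightarrow> \<sigma> permutes V"
  unfolding perm_of_def using bij_imp_permutes permutes_imp_bij permutes_not_in by metis

locale graph_aut_subgroup =
  fixes V :: "'a set" and E :: "'a \<Rightarrow> 'a \<Rightarrow> bool" and \<Gamma> :: "('a \<Rightarrow> 'a) set"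
  assumes simple: "simple_graph V E" and subgroup: "aut_subgroup V E \<Gamma>"
begin

lemma id_mem: "id \<in> \<Gamma>"
  using subgroup by (simp add: aut_subgroup_def)

lemma comp_mem: "\<sigma> \<in> \<Gamma> \<Longrightarrow> \<tau> \<in> \<Gamma> \<Longrightarrow> \<sigma> \<circ> \<tau> \<in> \<Gamma>"
  using subgroup by (simp add: aut_subgroup_def)

lemma inv_mem: "\<sigma> \<in> \<Gamma> \<Longrightarrow> inv \<sigma> \<in> \<Gamma>"
  using subgroup by (simp add: aut_subgroup_def)

lemma permutes_vertices: "\<sigma> \<in> \<Gamma> \<Longrightarrow> \<sigma> permutes V"
  using subgroup by (auto simp: aut_subgroup_def graph_aut_def perm_of_iff_permutes)

lemma bij_mem: "\<sigma> \<in> \<Gamma> \<Longrightarrow> bij \<sigma>"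
  by (rule permutes_bij[OF permutes_vertices])

lemma vertex_apply_iff: "\<sigma> \<in> \<Gamma> \<Longrightarrow> \<sigma> x \<in> V \<longleftrightarrow> x \<in> V"
  by (rule permutes_in_image[OF permutes_vertices])

lemma adjacent_apply_iff: "\<sigma> \<in> \<Gamma> \<Longrightarrow> E (\<sigma> x) (\<sigma> y) \<longleftrightarrow> E x y"
  using simple subgroup vertex_apply_iff[of \<sigma>]
  unfolding simple_graph_def aut_subgroup_def graph_aut_def by blast

lemma ext_edge_apply_iff: "\<sigma> \<in> \<Gamma> \<Longrightarrow> ext_edge V E (\<sigma> x) (\<sigma> y) \<longleftrightarrow> ext_edge V E x y"
  unfolding ext_edge_def
  using vertex_apply_iff adjacent_apply_iff bij_mem[THEN bij_is_inj] by (metis injD)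

lemma pair_orbit_apply:
  assumes "\<sigma> \<in> \<Gamma>"
  shows "{\<rho> ` {\<sigma> x, \<sigma> y} | \<rho>. \<rho> \<in> \<Gamma>} = {\<rho> ` {x, y} | \<rho>. \<rho> \<in> \<Gamma>}"
proof (intro equalityI subsetI)
  fix S assume "S \<in> {\<rho> ` {\<sigma> x, \<sigma> y} | \<rho>. \<rho> \<in> \<Gamma>}"
  then obtain \<rho> where "\<rho> \<in> \<Gamma>" "S = (\<rho> \<circ> \<sigma>) ` {x, y}" by auto
  then show "S \<in> {\<rho> ` {x, y} | \<rho>. \<rho> \<in> \<Gamma>}" using comp_mem[OF _ assms] by blast
next
  fix S assume "S \<in> {\<rho> ` {x, y} | \<rho>. \<rho> \<in> \<Gamma>}"
  then obtain \<rho> where "\<rho> \<in> \<Gamma>" "S = (\<rho> \<circ> inv \<sigma>) ` {\<sigma> x, \<sigma> y}"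
    using permutes_inverses(2)[OF permutes_vertices[OF assms]] by auto
  then show "S \<in> {\<rho> ` {\<sigma> x, \<sigma> y} | \<rho>. \<rho> \<in> \<Gamma>}" using comp_mem[OF _ inv_mem[OF assms]] by blast
qed

lemma color_apply:
  assumes "\<sigma> \<in> \<Gamma>"
  shows "color V E \<Gamma> (\<sigma> x) (\<sigma> y) = color V E \<Gamma> x y"
  unfolding color_def by (simp only: ext_edge_apply_iff[OF assms] pair_orbit_apply[OF assms])

lemma color_commute: "color V E \<Gamma> x y = color V E \<Gamma> y x"
  using simple unfolding color_def ext_edge_def simple_graph_def by (auto simp: insert_commute)

lemma vorbit_apply: "\<sigma> \<in> \<Gamma> \<Longrightarrow> \<sigma> v \<in> vorbit \<Gamma> v"
  unfolding vorbit_def by blast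

lemma vorbit_refl: "v \<in> vorbit \<Gamma> v"
  using vorbit_apply[OF id_mem] by simp

lemma vorbit_eq:
  assumes "u \<in> vorbit \<Gamma> v"
  shows "vorbit \<Gamma> u = vorbit \<Gamma> v"
proof -
  obtain \<rho> where \<rho>: "\<rho> \<in> \<Gamma>" "u = \<rho> v"
    using assms by (auto simp: vorbit_def)
  have v: "v = inv \<rho> u"
    using \<rho> permutes_inverses(2)[OF permutes_vertices] by metis
  show ?thesis
  proof (intro equalityI subsetI)
    fix x assume "x \<in> vorbit \<Gamma> u"
    then obtain \<sigma> where "\<sigma> \<in> \<Gamma>" "x = (\<sigma> \<circ> \<rho>) v"
      using \<rho>(2) by (auto simp: vorbit_def)
    then show "x \<in> vorbit \<Gamma> v"
      using vorbit_apply[OF comp_mem[OF _ \<rho>(1)]] by simp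
  next
    fix x assume "x \<in> vorbit \<Gamma> v"
    then obtain \<sigma> where "\<sigma> \<in> \<Gamma>" "x = (\<sigma> \<circ> inv \<rho>) u"
      using v by (auto simp: vorbit_def)
    then show "x \<in> vorbit \<Gamma> u"
      using vorbit_apply[OF comp_mem[OF _ inv_mem[OF \<rho>(1)]]] by simp
  qed
qed

lemma mem_vorbit_iff: "u \<in> vorbit \<Gamma> v \<longleftrightarrow> vorbit \<Gamma> u = vorbit \<Gamma> v"
  using vorbit_eq vorbit_refl by blast

lemma vorbit_apply_eq: "\<sigma> \<in> \<Gamma> \<Longrightarrow> vorbit \<Gamma> (\<sigma> x) = vorbit \<Gamma> x"
  by (rule vorbit_eq[OF vorbit_apply])

lemma vertex_class_apply_iff:
  "C \<in> vertex_classes V \<Gamma> \<Longrightarrow> \<sigma> \<in> \<Gamma> \<Longrightarrow> \<sigma> x \<in> C \<longleftrightarrow> x \<in> C"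
  unfolding vertex_classes_def by (auto simp: mem_vorbit_iff vorbit_apply_eq)

lemma vertex_classes_subset: "C \<in> vertex_classes V \<Gamma> \<Longrightarrow> C \<subseteq> V"
  unfolding vertex_classes_def vorbit_def using vertex_apply_iff by auto

lemma loop_color_eq_imp_vorbit:
  assumes "v \<in> V" "color V E \<Gamma> v v = color V E \<Gamma> w w"
  shows "w \<in> vorbit \<Gamma> v"
proof -
  have "ext_edge V E w w"
    using assms unfolding color_def ext_edge_def by (auto split: if_splits)
  then have "{w} \<in> {\<rho> ` {v, v} | \<rho>. \<rho> \<in> \<Gamma>}"
    using assms id_mem unfolding color_def ext_edge_def by (auto split: if_splits)
  then show ?thesis by (auto simp: vorbit_def)
qed

lemma same_class_color_imp_vorbit:
  assumes k: "k \<in> same_class_colors V E \<Gamma>" and vu: "color V E \<Gamma> v u = Some k"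
  shows "u \<in> vorbit \<Gamma> v"
proof -
  obtain a b where ab: "ext_edge V E a b" "color V E \<Gamma> a a = color V E \<Gamma> b b"
      "color V E \<Gamma> a b = Some k"
    using k by (auto simp: same_class_colors_def)
  have "b \<in> vorbit \<Gamma> a"
    using ab(1,2) by (simp add: ext_edge_def loop_color_eq_imp_vorbit)
  then have ab_orbit: "vorbit \<Gamma> b = vorbit \<Gamma> a" by (rule vorbit_eq)
  have "k = {\<sigma> ` {v, u} | \<sigma>. \<sigma> \<in> \<Gamma>}"
    using vu by (simp add: color_def split: if_splits)
  moreover have "{v, u} = id ` {v, u}" by simp
  ultimately have "{v, u} \<in> k" using id_mem by blast
  then obtain \<sigma> where \<sigma>: "\<sigma> \<in> \<Gamma>" and vu_eq: "{v, u} = {\<sigma> a, \<sigma> b}"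
    using ab(1,3) by (auto simp: color_def)
  have "{\<sigma> a, \<sigma> b} \<subseteq> vorbit \<Gamma> a"
    using vorbit_apply[OF \<sigma>] ab_orbit by auto
  then have "v \<in> vorbit \<Gamma> a" "u \<in> vorbit \<Gamma> a"
    unfolding vu_eq[symmetric] by auto
  then show ?thesis by (simp add: mem_vorbit_iff)
qed

end

locale ordered_vertex_classes = graph_aut_subgroup +
  fixes ord :: "'a set list"
  assumes set_ord: "set ord = vertex_classes V \<Gamma>"
begin

lemma ord_pos_apply: "\<sigma> \<in> \<Gamma> \<Longrightarrow> ord_pos ord (\<sigma> x) = ord_pos ord x"
  unfolding ord_pos_def using vertex_class_apply_iff set_ord by (metis nth_mem)

lemma ord_le_apply_iff: "\<sigma> \<in> \<Gamma> \<Longrightarrow> \<sigma> x \<in> ord_le ord i \<longleftrightarrow> x \<in> ord_le ord i"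
  unfolding ord_le_def using vertex_class_apply_iff set_ord nth_mem by fastforce

lemma ord_le_subset: "ord_le ord i \<subseteq> V"
  unfolding ord_le_def using vertex_classes_subset set_ord nth_mem by fastforce

lemma two_path_apply:
  assumes "\<sigma> \<in> \<Gamma>"
  shows "two_path V E \<Gamma> ord (\<sigma> v) (\<sigma> w) k h = two_path V E \<Gamma> ord v w k h"
proof -
  let ?L = "ord_le ord (min (ord_pos ord v) (ord_pos ord w))"
  let ?S = "\<lambda>v w. {u \<in> ?L. color V E \<Gamma> v u = Some k \<and> color V E \<Gamma> u w = Some h}"
  have preimage: "\<sigma> -` ?S (\<sigma> v) (\<sigma> w) = ?S v w"
    using assms by (auto simp: ord_le_apply_iff color_apply)
  have "card (?S (\<sigma> v) (\<sigma> w)) = card (?S v w)"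
    unfolding preimage[symmetric] using bij_mem[OF assms]
    by (intro card_vimage_inj[symmetric]) (auto simp: bij_def)
  then show ?thesis
    unfolding two_path_def using assms by (simp add: ord_pos_apply)
qed

lemma two_path_swap_generously_transitive:
  assumes "generously_transitive V \<Gamma>" "v \<in> V" "w \<in> vorbit \<Gamma> v"
  shows "two_path V E \<Gamma> ord v w k h = two_path V E \<Gamma> ord w v k h"
proof (cases "v = w")
  case False
  have "w \<in> V" "\<exists>\<tau>\<in>\<Gamma>. \<tau> v = w"
    using assms(2,3) vertex_apply_iff by (auto simp: vorbit_def)
  then obtain \<sigma> where "\<sigma> \<in> \<Gamma>" "\<sigma> v = w" "\<sigma> w = v"
    using assms(1,2) False unfolding generously_transitive_def by blast
  then show ?thesis using two_path_apply by metis
qed simp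

lemma two_path_swap_le_abelian:
  assumes ab: "abelian \<Gamma>" and \<tau>: "\<tau> \<in> \<Gamma>" and k: "k \<in> same_class_colors V E \<Gamma>"
  shows "two_path V E \<Gamma> ord v (\<tau> v) k h \<le> two_path V E \<Gamma> ord (\<tau> v) v k h"
proof -
  let ?L = "ord_le ord (ord_pos ord v)"
  let ?S1 = "{u \<in> ?L. color V E \<Gamma> v u = Some k \<and> color V E \<Gamma> u (\<tau> v) = Some h}"
  let ?S2 = "{u \<in> ?L. color V E \<Gamma> (\<tau> v) u = Some k \<and> color V E \<Gamma> u v = Some h}"
  define r where "r u = (SOME \<rho>. \<rho> \<in> \<Gamma> \<and> \<rho> v = u)" for u
  have r: "r u \<in> \<Gamma>" "r u v = u" if "u \<in> ?S1" for u
  proof -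
    have "\<exists>\<rho>. \<rho> \<in> \<Gamma> \<and> \<rho> v = u"
      using same_class_color_imp_vorbit[OF k] that by (auto simp: vorbit_def)
    then show "r u \<in> \<Gamma>" "r u v = u" unfolding r_def by (metis (mono_tags, lifting) someI_ex)+
  qed
  define f where "f u = \<tau> (inv (r u) v)" for u
  have "f u \<in> ?S2" if u: "u \<in> ?S1" for u
  proof -
    define \<rho> where "\<rho> = r u"
    have \<rho>: "\<rho> \<in> \<Gamma>" "\<rho> v = u" and inv_\<rho>: "inv \<rho> \<in> \<Gamma>"
      using r[OF u] inv_mem unfolding \<rho>_def by auto
    note \<rho>_inv = permutes_inverses[OF permutes_vertices[OF \<rho>(1)]]
    have "v \<in> ?L"
      using u \<rho> ord_le_apply_iff by blast
    then have "f u \<in> ?L"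
      unfolding f_def \<rho>_def[symmetric] using \<tau> inv_\<rho> ord_le_apply_iff by blast
    moreover have "color V E \<Gamma> (\<tau> v) (f u) = Some k"
    proof -
      have "color V E \<Gamma> (\<tau> v) (f u) = color V E \<Gamma> (\<rho> v) (\<rho> (inv \<rho> v))"
        unfolding f_def \<rho>_def[symmetric] using \<tau> \<rho>(1) by (simp add: color_apply)
      then show ?thesis using u \<rho>(2) \<rho>_inv color_commute by simp
    qed
    moreover have "color V E \<Gamma> (f u) v = Some h"
    proof -
      have "\<rho> (f u) = \<tau> v"
        using ab \<rho>(1) \<tau> \<rho>_inv unfolding abelian_def f_def \<rho>_def[symmetric] by (metis comp_apply)
      then have "color V E \<Gamma> (f u) v = color V E \<Gamma> (\<tau> v) u"
        using \<rho> color_apply by metis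
      then show ?thesis using u color_commute by simp
    qed
    ultimately show ?thesis by simp
  qed
  moreover have "inj_on f ?S1"
  proof (rule inj_onI)
    fix u1 u2 assume u1: "u1 \<in> ?S1" and u2: "u2 \<in> ?S1" and "f u1 = f u2"
    then have "inv (r u1) v = inv (r u2) v"
      unfolding f_def using bij_mem[OF \<tau>] by (simp add: bij_is_inj inj_eq)
    then have "r u1 v = r u2 v"
      using abelian_inv_apply_eqD[OF ab] r u1 u2 bij_mem by blast
    then show "u1 = u2" using r u1 u2 by simp
  qed
  moreover have "finite ?S2"
    using simple ord_le_subset by (auto simp: simple_graph_def intro: finite_subset)
  ultimately have "card ?S1 \<le> card ?S2"
    by (intro card_inj_on_le) auto
  then show ?thesis
    unfolding two_path_def using \<tau> by (simp add: ord_pos_apply)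
qed

lemma two_path_swap_abelian:
  assumes "abelian \<Gamma>" "w \<in> vorbit \<Gamma> v" "k \<in> same_class_colors V E \<Gamma>"
  shows "two_path V E \<Gamma> ord v w k h = two_path V E \<Gamma> ord w v k h"
proof -
  obtain \<tau> where \<tau>: "\<tau> \<in> \<Gamma>" "w = \<tau> v" using assms(2) by (auto simp: vorbit_def)
  have "v = inv \<tau> w"
    using \<tau> permutes_inverses(2)[OF permutes_vertices] by metis
  then show ?thesis
    using two_path_swap_le_abelian[OF assms(1) \<tau>(1) assms(3), of v h]
      two_path_swap_le_abelian[OF assms(1) inv_mem[OF \<tau>(1)] assms(3), of w h] \<tau>(2)
    by simp
qed

end

theorem lemma3p10:
  fixes V :: "'a set" and E :: "'a \<Rightarrow> 'a \<Rightarrow> bool" and \<Gamma> :: "('a \<Rightarrow> 'a) set"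
    and ord :: "'a set list"
  assumes G: "simple_graph V E"
    and sub: "aut_subgroup V E \<Gamma>"
    and ord_dist: "distinct ord"
    and ord_set: "set ord = vertex_classes V \<Gamma>"
  shows "(\<forall>v w \<sigma>. ext_edge V E v w \<longrightarrow> \<sigma> \<in> \<Gamma> \<longrightarrow>
            (\<forall>k h. two_path V E \<Gamma> ord v w k h = two_path V E \<Gamma> ord (\<sigma> v) (\<sigma> w) k h))
       \<and> ((generously_transitive V \<Gamma> \<or> cyclic_group \<Gamma>) \<longrightarrow>
            (\<forall>v\<in>V. \<forall>w\<in>V. color V E \<Gamma> v v = color V E \<Gamma> w w \<longrightarrow>
               (\<forall>k\<in>same_class_colors V E \<Gamma>. \<forall>h\<in>same_class_colors V E \<Gamma>.
                  two_path V E \<Gamma> ord v w k h = two_path V E \<Gamma> ord w v k h)))"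
proof -
  interpret ordered_vertex_classes V E \<Gamma> ord
    using G sub ord_set by unfold_locales
  show ?thesis
  proof (intro conjI allI impI ballI)
    fix v w \<sigma> k h assume "\<sigma> \<in> \<Gamma>"
    then show "two_path V E \<Gamma> ord v w k h = two_path V E \<Gamma> ord (\<sigma> v) (\<sigma> w) k h"
      by (simp add: two_path_apply)
  next
    fix v w k h
    assume sym: "generously_transitive V \<Gamma> \<or> cyclic_group \<Gamma>" and "v \<in> V"
      and "color V E \<Gamma> v v = color V E \<Gamma> w w" and k: "k \<in> same_class_colors V E \<Gamma>"
    then have "w \<in> vorbit \<Gamma> v" by (simp add: loop_color_eq_imp_vorbit)
    with sym show "two_path V E \<Gamma> ord v w k h = two_path V E \<Gamma> ord w v k h"
      using two_path_swap_generously_transitive[OF _ \<open>v \<in> V\<close>]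
        two_path_swap_abelian[OF cyclic_group_imp_abelian _ k] by blast
  qed
qed

end
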